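(* Let $\langle A, \leq, \otimes, \mathbf{1}\rangle$ be a finitely distributive semi-lattice monoid (respectively, a distributive complete lattice monoid), with bottom element $\bot$. Let $Lex_\omega(A) = I(A)^\omega \cup I(A)^\ast A \{\bot\}^\omega$, with componentwise operation $\otimes^\omega$, identity $\mathbf{1}^\omega$, and order $a \leq_\omega b$ iff $a_{\leq k} \leq_k b_{\leq k}$ for all $k\geq1$. Then $\langle Lex_\omega(A), \leq_\omega, \otimes^\omega, \mathbf{1}^\omega\rangle$ is a finitely distributive semi-lattice monoid (respectively, a distributive complete lattice monoid).
   Context: A semi-lattice monoid (SLM) is $\langle A,\leq,\otimes,\mathbf{1}\rangle$ where $\langle A,\otimes,\mathbf{1}\rangle$ is a commutative monoid and $\langle A,\leq\rangle$ a partial order in which every finite subset (including $\emptyset$, whose LUB is the bottom $\bot$) has a least upper bound $\bigvee X$; a complete lattice monoid (CLM) is the same with LUBs for all subsets. Finitely distributive: $a\otimes\bigvee X=\bigvee\{a\otimes x\mid x\in X\}$ for all $a$ and finite $X$; distributive (CLM): for all $X$. $a<b$ means $a\leq b$, $a\neq b$. $I(A) = \{c \in A \mid \forall a,b \in A.\ a \otimes c = b \otimes c \Rightarrow a = b\}$, $C(A)=A\setminus I(A)$. $I(A)^\omega$: infinite sequences over $I(A)$; $I(A)^\ast A\{\bot\}^\omega$: infinite sequences consisting of a finite (possibly empty) sequence over $I(A)$, then one element of $A$, then infinitely many $\bot$. $a_{\leq k}$ is the length-$k$ prefix. The order $\leq_k$ on $A^k$: $\leq_1=\leq$, and for $k\geq2$,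 $a_1 \ldots a_k \leq_k b_1 \ldots b_k$ iff $a_1 < b_1$, or $a_1 = b_1$ and $a_2 \ldots a_k \leq_{k-1} b_2 \ldots b_k$. *)

theory Defs
  imports Main
begin

definition is_lub :: "'a set \<Rightarrow> ('a \<Rightarrow> 'a \<Rightarrow> bool) \<Rightarrow> 'a set \<Rightarrow> 'a \<Rightarrow> bool" where
  "is_lub A le X u \<longleftrightarrow> u \<in> A \<and> (\<forall>x\<in>X. le x u) \<and> (\<forall>v\<in>A. (\<forall>x\<in>X. le x v) \<longrightarrow> le u v)"

definition comm_monoid_on :: "'a set \<Rightarrow> ('a \<Rightarrow> 'a \<Rightarrow> 'a) \<Rightarrow> 'a \<Rightarrow> bool" where
  "comm_monoid_on A mult one \<longleftrightarrow>
     one \<in> A \<and> (\<forall>a\<in>A. \<forall>b\<in>A. mult a b \<in> A) \<and>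
     (\<forall>a\<in>A. \<forall>b\<in>A. \<forall>c\<in>A. mult (mult a b) c = mult a (mult b c)) \<and>
     (\<forall>a\<in>A. \<forall>b\<in>A. mult a b = mult b a) \<and>
     (\<forall>a\<in>A. mult a one = a)"

definition partial_order_on_rel :: "'a set \<Rightarrow> ('a \<Rightarrow> 'a \<Rightarrow> bool) \<Rightarrow> bool" where
  "partial_order_on_rel A le \<longleftrightarrow>
     (\<forall>a\<in>A. le a a) \<and>
     (\<forall>a\<in>A. \<forall>b\<in>A. le a b \<and> le b a \<longrightarrow> a = b) \<and>
     (\<forall>a\<in>A. \<forall>b\<in>A. \<forall>c\<in>A. le a b \<and> le b c \<longrightarrow> le a c)"

definition slm :: "'a set \<Rightarrow> ('a \<Rightarrow> 'a \<Rightarrow> bool) \<Rightarrow> ('a \<Rightarrow> 'a \<Rightarrow> 'a) \<Rightarrow> 'a \<Rightarrow> bool" where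
  "slm A le mult one \<longleftrightarrow> comm_monoid_on A mult one \<and> partial_order_on_rel A le \<and>
     (\<forall>X. finite X \<and> X \<subseteq> A \<longrightarrow> (\<exists>u. is_lub A le X u))"

definition clm :: "'a set \<Rightarrow> ('a \<Rightarrow> 'a \<Rightarrow> bool) \<Rightarrow> ('a \<Rightarrow> 'a \<Rightarrow> 'a) \<Rightarrow> 'a \<Rightarrow> bool" where
  "clm A le mult one \<longleftrightarrow> comm_monoid_on A mult one \<and> partial_order_on_rel A le \<and>
     (\<forall>X. X \<subseteq> A \<longrightarrow> (\<exists>u. is_lub A le X u))"

text \<open>a \<otimes> \<Or>X = \<Or>{a \<otimes> x | x \<in> X} (LUBs are unique in a partial order).\<close>
definition finitely_distributive :: "'a set \<Rightarrow> ('a \<Rightarrow> 'a \<Rightarrow> bool) \<Rightarrow> ('a \<Rightarrow> 'a \<Rightarrow> 'a) \<Rightarrow> bool" where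
  "finitely_distributive A le mult \<longleftrightarrow>
     (\<forall>a\<in>A. \<forall>X u. finite X \<and> X \<subseteq> A \<and> is_lub A le X u \<longrightarrow> is_lub A le ((\<lambda>x. mult a x) ` X) (mult a u))"

definition distributive :: "'a set \<Rightarrow> ('a \<Rightarrow> 'a \<Rightarrow> bool) \<Rightarrow> ('a \<Rightarrow> 'a \<Rightarrow> 'a) \<Rightarrow> bool" where
  "distributive A le mult \<longleftrightarrow>
     (\<forall>a\<in>A. \<forall>X u. X \<subseteq> A \<and> is_lub A le X u \<longrightarrow> is_lub A le ((\<lambda>x. mult a x) ` X) (mult a u))"

definition bot_of :: "'a set \<Rightarrow> ('a \<Rightarrow> 'a \<Rightarrow> bool) \<Rightarrow> 'a" where
  "bot_of A le = (THE u. is_lub A le {} u)"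

definition canc :: "'a set \<Rightarrow> ('a \<Rightarrow> 'a \<Rightarrow> 'a) \<Rightarrow> 'a set" where
  "canc A mult = {c \<in> A. \<forall>a\<in>A. \<forall>b\<in>A. mult a c = mult b c \<longrightarrow> a = b}"

text \<open>Lex_omega(A) = I(A)^omega \<union> I(A)^* A {bot}^omega, sequences indexed from 0.\<close>
definition lex_omega :: "'a set \<Rightarrow> ('a \<Rightarrow> 'a \<Rightarrow> bool) \<Rightarrow> ('a \<Rightarrow> 'a \<Rightarrow> 'a) \<Rightarrow> (nat \<Rightarrow> 'a) set" where
  "lex_omega A le mult =
     {s. \<forall>i. s i \<in> canc A mult} \<union>
     {s. \<exists>n. (\<forall>i<n. s i \<in> canc A mult) \<and> s n \<in> A \<and> (\<forall>i>n. s i = bot_of A le)}"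

text \<open>lex_le le k a b: the order \<le>_k on the length-k prefixes of a and b (k \<ge> 1).\<close>
fun lex_le :: "('a \<Rightarrow> 'a \<Rightarrow> bool) \<Rightarrow> nat \<Rightarrow> (nat \<Rightarrow> 'a) \<Rightarrow> (nat \<Rightarrow> 'a) \<Rightarrow> bool" where
  "lex_le le 0 a b = True"
| "lex_le le (Suc 0) a b = le (a 0) (b 0)"
| "lex_le le (Suc (Suc k)) a b =
     ((le (a 0) (b 0) \<and> a 0 \<noteq> b 0) \<or>
      (a 0 = b 0 \<and> lex_le le (Suc k) (\<lambda>i. a (Suc i)) (\<lambda>i. b (Suc i))))"

definition lex_omega_le :: "('a \<Rightarrow> 'a \<Rightarrow> bool) \<Rightarrow> (nat \<Rightarrow> 'a) \<Rightarrow> (nat \<Rightarrow> 'a) \<Rightarrow> bool" where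
  "lex_omega_le le a b \<longleftrightarrow> (\<forall>k\<ge>1. lex_le le k a b)"

definition mult_omega :: "('a \<Rightarrow> 'a \<Rightarrow> 'a) \<Rightarrow> (nat \<Rightarrow> 'a) \<Rightarrow> (nat \<Rightarrow> 'a) \<Rightarrow> (nat \<Rightarrow> 'a)" where
  "mult_omega mult a b = (\<lambda>i. mult (a i) (b i))"

definition one_omega :: "'a \<Rightarrow> (nat \<Rightarrow> 'a)" where
  "one_omega one = (\<lambda>i. one)"

end

theory Submission
  imports Defs
begin

text \<open>Two sequences are compared at their first difference, so
  \<open>a \<le>\<^sub>\<omega> b\<close> holds iff \<open>a m \<le> b m\<close> at every \<open>m\<close> where \<open>a\<close> and \<open>b\<close> agree below \<open>m\<close>.
  The LUB \<open>u\<close> of a set \<open>X\<close> of sequences is then built entrywise by course-of-values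
  recursion: \<open>u k\<close> is the LUB of the \<open>k\<close>-th entries of those members of \<open>X\<close> that agree
  with \<open>u\<close> below \<open>k\<close>. Once \<open>u i\<close> is not cancellative, all these members are \<open>\<bottom>\<close> after
  \<open>i\<close>, so \<open>u\<close> lies in \<open>Lex\<^sub>\<omega>(A)\<close>. Multiplying by a sequence whose first \<open>k\<close> entries
  are cancellative preserves agreement below \<open>k\<close> in both directions, so distributivity of
  \<open>A\<close> applies entrywise; after a non-cancellative entry everything is \<open>\<bottom>\<close>, which is
  absorbing because \<open>a \<otimes> \<Or>{} = \<Or>{}\<close>.\<close>

lemma comm_monoid_onD:
  assumes "comm_monoid_on A mult one"
  shows "one \<in> A"
    and "a \<in> A \<Longrightarrow> b \<in> A \<Longrightarrow> mult a b \<in> A"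
    and "a \<in> A \<Longrightarrow> b \<in> A \<Longrightarrow> c \<in> A \<Longrightarrow> mult (mult a b) c = mult a (mult b c)"
    and "a \<in> A \<Longrightarrow> b \<in> A \<Longrightarrow> mult a b = mult b a"
    and "a \<in> A \<Longrightarrow> mult a one = a"
  using assms unfolding comm_monoid_on_def by blast+

lemma partial_order_on_relD:
  assumes "partial_order_on_rel A le"
  shows "a \<in> A \<Longrightarrow> le a a"
    and "a \<in> A \<Longrightarrow> b \<in> A \<Longrightarrow> le a b \<Longrightarrow> le b a \<Longrightarrow> a = b"
    and "a \<in> A \<Longrightarrow> b \<in> A \<Longrightarrow> c \<in> A \<Longrightarrow> le a b \<Longrightarrow> le b c \<Longrightarrow> le a c"
  using assms unfolding partial_order_on_rel_def by blast+

lemma is_lub_unique: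
  assumes "partial_order_on_rel A le" "is_lub A le X u" "is_lub A le X v"
  shows "u = v"
  using assms unfolding partial_order_on_rel_def is_lub_def by blast

lemma bot_of_eq:
  assumes "partial_order_on_rel A le" "is_lub A le {} b"
  shows "bot_of A le = b"
  unfolding bot_of_def using assms by (blast intro: is_lub_unique)

lemma partial_order_on_rel_subset:
  "partial_order_on_rel A le \<Longrightarrow> B \<subseteq> A \<Longrightarrow> partial_order_on_rel B le"
  unfolding partial_order_on_rel_def by blast

lemma finitely_distributiveD:
  "finitely_distributive A le mult \<Longrightarrow> a \<in> A \<Longrightarrow> finite X \<Longrightarrow> X \<subseteq> A \<Longrightarrow>
    is_lub A le X u \<Longrightarrow> is_lub A le (mult a ` X) (mult a u)"
  unfolding finitely_distributive_def by blast

lemma distributiveD: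
  "distributive A le mult \<Longrightarrow> a \<in> A \<Longrightarrow> X \<subseteq> A \<Longrightarrow>
    is_lub A le X u \<Longrightarrow> is_lub A le (mult a ` X) (mult a u)"
  unfolding distributive_def by blast

lemma clm_imp_slm: "clm A le mult one \<Longrightarrow> slm A le mult one"
  unfolding clm_def slm_def by blast

lemma distributive_imp_finitely_distributive:
  "distributive A le mult \<Longrightarrow> finitely_distributive A le mult"
  unfolding distributive_def finitely_distributive_def by blast

lemma one_canc:
  assumes "comm_monoid_on A mult one"
  shows "one \<in> canc A mult"
  using comm_monoid_onD(1,5)[OF assms] unfolding canc_def by auto

lemma mult_canc:
  assumes cm: "comm_monoid_on A mult one" and c: "c \<in> canc A mult" and d: "d \<in> canc A mult"
  shows "mult c d \<in> canc A mult"
proof -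
  have cd: "c \<in> A" "d \<in> A" using c d unfolding canc_def by auto
  have "x = y" if "x \<in> A" "y \<in> A" "mult x (mult c d) = mult y (mult c d)" for x y
  proof -
    have "mult (mult x c) d = mult (mult y c) d"
      using that cd by (simp add: comm_monoid_onD(3)[OF cm])
    moreover have "mult x c \<in> A" "mult y c \<in> A"
      using that cd comm_monoid_onD(2)[OF cm] by blast+
    ultimately have "mult x c = mult y c"
      using d unfolding canc_def by blast
    then show ?thesis using c that unfolding canc_def by blast
  qed
  then show ?thesis using cd comm_monoid_onD(2)[OF cm] unfolding canc_def by blast
qed

lemma canc_cancel_left:
  assumes "comm_monoid_on A mult one" "c \<in> canc A mult" "x \<in> A" "y \<in> A"
  shows "mult c x = mult c y \<longleftrightarrow> x = y"
proof -
  have "mult c x = mult x c" "mult c y = mult y c"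
    using assms(2-4) comm_monoid_onD(4)[OF assms(1)] unfolding canc_def by blast+
  moreover have "mult x c = mult y c \<Longrightarrow> x = y"
    using assms(2-4) unfolding canc_def by blast
  ultimately show ?thesis by auto
qed

lemma lex_le_Suc_iff:
  "lex_le le (Suc k) a b \<longleftrightarrow>
    (\<exists>m<k. (\<forall>i<m. a i = b i) \<and> le (a m) (b m) \<and> a m \<noteq> b m) \<or>
    ((\<forall>i<k. a i = b i) \<and> le (a k) (b k))"
proof (induction k arbitrary: a b)
  case 0
  then show ?case by simp
next
  case (Suc k)
  show ?case
    by (simp only: lex_le.simps Suc.IH All_less_Suc2 Ex_less_Suc2) auto
qed

lemma lex_omega_le_iff:
  "lex_omega_le le a b \<longleftrightarrow> (\<forall>m. (\<forall>i<m. a i = b i) \<longrightarrow> le (a m) (b m))"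
proof
  assume ab: "lex_omega_le le a b"
  show "\<forall>m. (\<forall>i<m. a i = b i) \<longrightarrow> le (a m) (b m)"
  proof (intro allI impI)
    fix m assume "\<forall>i<m. a i = b i"
    moreover have "lex_le le (Suc m) a b" using ab unfolding lex_omega_le_def by simp
    ultimately show "le (a m) (b m)" unfolding lex_le_Suc_iff by auto
  qed
next
  assume agree_le: "\<forall>m. (\<forall>i<m. a i = b i) \<longrightarrow> le (a m) (b m)"
  show "lex_omega_le le a b" unfolding lex_omega_le_def
  proof (intro allI impI)
    fix k :: nat assume "1 \<le> k"
    then obtain n where k: "k = Suc n" by (cases k) auto
    show "lex_le le k a b"
    proof (cases "\<forall>i<n. a i = b i")
      case True
      then show ?thesis unfolding k lex_le_Suc_iff using agree_le by blast
    next
      case False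
      then obtain m where "a m \<noteq> b m" "\<forall>i<m. a i = b i"
        using exists_least_iff[of "\<lambda>i. a i \<noteq> b i"] by blast
      moreover have "m < n"
      proof (rule ccontr)
        assume "\<not> m < n"
        then have "\<forall>i<n. a i = b i" using \<open>\<forall>i<m. a i = b i\<close> by auto
        with False show False by blast
      qed
      ultimately show ?thesis unfolding k lex_le_Suc_iff using agree_le by blast
    qed
  qed
qed

lemma partial_order_lex_omega_le:
  assumes po: "partial_order_on_rel A le"
  shows "partial_order_on_rel {s. \<forall>i. s i \<in> A} (lex_omega_le le)"
  unfolding partial_order_on_rel_def lex_omega_le_iff
proof (intro conjI ballI impI allI)
  fix a :: "nat \<Rightarrow> 'a" and m assume "a \<in> {s. \<forall>i. s i \<in> A}"
  then show "le (a m) (a m)" using partial_order_on_relD(1)[OF po] by blast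
next
  fix a b :: "nat \<Rightarrow> 'a"
  assume A: "a \<in> {s. \<forall>i. s i \<in> A}" "b \<in> {s. \<forall>i. s i \<in> A}"
    and le_both: "(\<forall>m. (\<forall>i<m. a i = b i) \<longrightarrow> le (a m) (b m)) \<and>
                  (\<forall>m. (\<forall>i<m. b i = a i) \<longrightarrow> le (b m) (a m))"
  have "a m = b m" for m
  proof (induction m rule: less_induct)
    case (less m)
    then have "le (a m) (b m)" "le (b m) (a m)" using le_both by auto
    then show ?case using A partial_order_on_relD(2)[OF po] by blast
  qed
  then show "a = b" by blast
next
  fix a b c :: "nat \<Rightarrow> 'a" and m
  assume A: "a \<in> {s. \<forall>i. s i \<in> A}" "b \<in> {s. \<forall>i. s i \<in> A}" "c \<in> {s. \<forall>i. s i \<in> A}"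
    and le_ab_bc: "(\<forall>m. (\<forall>i<m. a i = b i) \<longrightarrow> le (a m) (b m)) \<and>
                   (\<forall>m. (\<forall>i<m. b i = c i) \<longrightarrow> le (b m) (c m))"
    and ac: "\<forall>i<m. a i = c i"
  \<comment> \<open>Agreement of \<open>a\<close> and \<open>c\<close> below \<open>n\<close> squeezes \<open>b\<close> in between, index by index.\<close>
  have agree_ab: "\<forall>i<n. a i = b i" if "\<forall>i<n. a i = c i" for n
    using that
  proof (induction n)
    case (Suc n)
    then have ab: "\<forall>i<n. a i = b i" by simp
    with Suc.prems have bc: "\<forall>i<n. b i = c i" by simp
    have "le (a n) (b n)" using le_ab_bc ab by blast
    moreover have "le (b n) (c n)" using le_ab_bc bc by blast
    then have "le (b n) (a n)" using Suc.prems by simp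
    ultimately have "a n = b n" using A partial_order_on_relD(2)[OF po] by blast
    with \<open>\<forall>i<n. a i = b i\<close> show ?case using less_Suc_eq by auto
  qed simp
  have "le (a m) (b m)" "le (b m) (c m)" using agree_ab[OF ac] ac le_ab_bc by auto
  then show "le (a m) (c m)" using A partial_order_on_relD(3)[OF po] by blast
qed

lemma lex_omega_iff:
  assumes "bot_of A le \<in> A"
  shows "s \<in> lex_omega A le mult \<longleftrightarrow>
    (\<forall>i. s i \<in> A) \<and> (\<forall>i j. i < j \<longrightarrow> s i \<notin> canc A mult \<longrightarrow> s j = bot_of A le)"
proof
  assume s: "s \<in> lex_omega A le mult"
  show "(\<forall>i. s i \<in> A) \<and> (\<forall>i j. i < j \<longrightarrow> s i \<notin> canc A mult \<longrightarrow> s j = bot_of A le)"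
  proof (cases "\<forall>i. s i \<in> canc A mult")
    case True
    then show ?thesis unfolding canc_def by blast
  next
    case False
    with s obtain n where n: "\<forall>i<n. s i \<in> canc A mult" "s n \<in> A" "\<forall>i>n. s i = bot_of A le"
      unfolding lex_omega_def by blast
    then have "s i \<in> A" for i
      using assms unfolding canc_def by (cases i n rule: linorder_cases) auto
    moreover have "s j = bot_of A le" if "i < j" "s i \<notin> canc A mult" for i j
    proof -
      have "n \<le> i" using n(1) that(2) not_less by blast
      then show ?thesis using n(3) that(1) by simp
    qed
    ultimately show ?thesis by blast
  qed
next
  assume s: "(\<forall>i. s i \<in> A) \<and> (\<forall>i j. i < j \<longrightarrow> s i \<notin> canc A mult \<longrightarrow> s j = bot_of A le)"
  show "s \<in> lex_omega A le mult"
  proof (cases "\<forall>i. s i \<in> canc A mult")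
    case True
    then show ?thesis unfolding lex_omega_def by blast
  next
    case False
    then obtain n where "s n \<notin> canc A mult" "\<forall>i<n. s i \<in> canc A mult"
      using exists_least_iff[of "\<lambda>i. s i \<notin> canc A mult"] by blast
    with s have "(\<forall>i<n. s i \<in> canc A mult) \<and> s n \<in> A \<and> (\<forall>i>n. s i = bot_of A le)"
      by blast
    then show ?thesis unfolding lex_omega_def by blast
  qed
qed

lemma comm_monoid_on_lex_omega:
  assumes cm: "comm_monoid_on A mult one" and bot: "bot_of A le \<in> A"
    and absorb: "\<And>a. a \<in> A \<Longrightarrow> mult a (bot_of A le) = bot_of A le"
  shows "comm_monoid_on (lex_omega A le mult) (mult_omega mult) (one_omega one)"
proof -
  note Lex_iff = lex_omega_iff[OF bot]
  have absorb_left: "mult (bot_of A le) a = bot_of A le" if "a \<in> A" for a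
    using absorb[OF that] comm_monoid_onD(4)[OF cm that bot] by simp
  have entry: "s i \<in> A" if "s \<in> lex_omega A le mult" for s i
    using that unfolding Lex_iff by blast
  show ?thesis
    unfolding comm_monoid_on_def
  proof (intro conjI ballI)
    show "one_omega one \<in> lex_omega A le mult"
      using one_canc[OF cm] unfolding Lex_iff one_omega_def canc_def by blast
  next
    fix s t assume s: "s \<in> lex_omega A le mult" and t: "t \<in> lex_omega A le mult"
    show "mult_omega mult s t \<in> lex_omega A le mult"
      unfolding Lex_iff
    proof (intro conjI allI impI)
      fix i show "mult_omega mult s t i \<in> A"
        using s t entry comm_monoid_onD(2)[OF cm] unfolding mult_omega_def by blast
    next
      fix i j assume "i < j" and "mult_omega mult s t i \<notin> canc A mult"
      then have "s j = bot_of A le \<or> t j = bot_of A le"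
        using s t mult_canc[OF cm] unfolding Lex_iff mult_omega_def by blast
      then show "mult_omega mult s t j = bot_of A le"
        using s t entry absorb absorb_left unfolding mult_omega_def by auto
    qed
  next
    fix s t u
    assume "s \<in> lex_omega A le mult" "t \<in> lex_omega A le mult" "u \<in> lex_omega A le mult"
    then show "mult_omega mult (mult_omega mult s t) u = mult_omega mult s (mult_omega mult t u)"
      using entry comm_monoid_onD(3)[OF cm] by (simp add: mult_omega_def)
  next
    fix s t assume "s \<in> lex_omega A le mult" "t \<in> lex_omega A le mult"
    then show "mult_omega mult s t = mult_omega mult t s"
      using entry comm_monoid_onD(4)[OF cm] unfolding mult_omega_def by metis
  next
    fix s assume "s \<in> lex_omega A le mult"
    then show "mult_omega mult s (one_omega one) = s"
      using entry comm_monoid_onD(5)[OF cm] by (simp add: mult_omega_def one_omega_def)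
  qed
qed

definition next_entries :: "(nat \<Rightarrow> 'a) set \<Rightarrow> (nat \<Rightarrow> 'a) \<Rightarrow> nat \<Rightarrow> 'a set" where
  "next_entries X u k = (\<lambda>x. x k) ` {x \<in> X. \<forall>i<k. x i = u i}"

lemma next_entries_cong: "\<forall>i<k. u i = v i \<Longrightarrow> next_entries X u k = next_entries X v k"
  unfolding next_entries_def by simp

lemma finite_next_entries: "finite X \<Longrightarrow> finite (next_entries X u k)"
  unfolding next_entries_def by simp

lemma entrywise_lub_exists:
  assumes "\<And>u k. \<exists>v. is_lub A le (next_entries X u k) v"
  shows "\<exists>u. \<forall>k. is_lub A le (next_entries X u k) (u k)"
proof -
  \<comment> \<open>\<open>F u k\<close> only depends on \<open>u\<close> below \<open>k\<close>, so it can be iterated by well-founded recursion.\<close>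
  define F where "F u k = (SOME v. is_lub A le (next_entries X u k) v)" for u k
  have "adm_wf less_than F"
    unfolding adm_wf_def F_def using next_entries_cong by (metis less_than_iff)
  then have fixpoint: "wfrec less_than F = F (wfrec less_than F)"
    by (rule wfrec_fixpoint[OF wf_less_than])
  define u where "u = wfrec less_than F"
  have "u k = F u k" for k
    using fixpoint unfolding u_def by (rule fun_cong)
  moreover have "is_lub A le (next_entries X u k) (F u k)" for k
    unfolding F_def using assms by (rule someI_ex)
  ultimately show ?thesis by metis
qed

locale fd_slm =
  fixes A :: "'a set" and le :: "'a \<Rightarrow> 'a \<Rightarrow> bool" and mult :: "'a \<Rightarrow> 'a \<Rightarrow> 'a" and one :: 'a
  assumes slm: "slm A le mult one" and fin_distrib: "finitely_distributive A le mult"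
begin

abbreviation "bottom \<equiv> bot_of A le"
abbreviation "Lex \<equiv> lex_omega A le mult"

lemma comm_monoid: "comm_monoid_on A mult one"
  using slm unfolding slm_def by blast

lemma partial_order: "partial_order_on_rel A le"
  using slm unfolding slm_def by blast

lemma finite_lub_exists: "finite X \<Longrightarrow> X \<subseteq> A \<Longrightarrow> \<exists>u. is_lub A le X u"
  using slm unfolding slm_def by blast

lemma bottom_is_lub: "is_lub A le {} bottom"
proof -
  obtain b where b: "is_lub A le {} b" using finite_lub_exists[of "{}"] by blast
  then have "bottom = b" by (rule bot_of_eq[OF partial_order])
  with b show ?thesis by simp
qed

lemma bottom_in: "bottom \<in> A"
  using bottom_is_lub unfolding is_lub_def by blast

lemma mult_bottom:
  assumes "a \<in> A"
  shows "mult a bottom = bottom"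
proof -
  have "is_lub A le (mult a ` {}) (mult a bottom)"
    using finitely_distributiveD[OF fin_distrib assms _ _ bottom_is_lub] by simp
  then have "is_lub A le {} (mult a bottom)" by simp
  then show ?thesis by (rule is_lub_unique[OF partial_order _ bottom_is_lub])
qed

lemma bottom_mult:
  assumes "a \<in> A"
  shows "mult bottom a = bottom"
  using mult_bottom[OF assms] comm_monoid_onD(4)[OF comm_monoid assms bottom_in] by simp

lemma is_lub_subset_bottom:
  assumes "Y \<subseteq> {bottom}"
  shows "is_lub A le Y v \<longleftrightarrow> v = bottom"
proof -
  have Y_bottom: "is_lub A le Y bottom"
    using assms bottom_in bottom_is_lub partial_order_on_relD(1)[OF partial_order]
    unfolding is_lub_def by blast
  show ?thesis
  proof
    assume "is_lub A le Y v"
    then show "v = bottom" by (rule is_lub_unique[OF partial_order _ Y_bottom])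
  qed (use Y_bottom in simp)
qed

lemmas Lex_iff = lex_omega_iff[OF bottom_in]

lemma Lex_entry: "s \<in> Lex \<Longrightarrow> s i \<in> A"
  unfolding Lex_iff by blast

lemma Lex_bottom_after: "s \<in> Lex \<Longrightarrow> i < j \<Longrightarrow> s i \<notin> canc A mult \<Longrightarrow> s j = bottom"
  unfolding Lex_iff by blast

lemma comm_monoid_Lex: "comm_monoid_on Lex (mult_omega mult) (one_omega one)"
  using comm_monoid_on_lex_omega[OF comm_monoid bottom_in mult_bottom] .

lemma partial_order_Lex: "partial_order_on_rel Lex (lex_omega_le le)"
  by (rule partial_order_on_rel_subset[OF partial_order_lex_omega_le[OF partial_order]])
    (auto simp: Lex_iff)

lemma next_entries_subset: "X \<subseteq> Lex \<Longrightarrow> next_entries X u k \<subseteq> A"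
  unfolding next_entries_def using Lex_entry by blast

lemma is_lub_Lex_entrywise:
  assumes X: "X \<subseteq> Lex" and u: "\<And>k. is_lub A le (next_entries X u k) (u k)"
  shows "is_lub Lex (lex_omega_le le) X u"
proof -
  have "u \<in> Lex" unfolding Lex_iff
  proof (intro conjI allI impI)
    fix k show "u k \<in> A" using u unfolding is_lub_def by blast
  next
    fix i j assume "i < j" "u i \<notin> canc A mult"
    then have "x j = bottom" if "x \<in> X" "\<forall>i<j. x i = u i" for x
      using that X Lex_bottom_after by (metis subsetD)
    then have "next_entries X u j \<subseteq> {bottom}"
      unfolding next_entries_def by blast
    then show "u j = bottom" using u is_lub_subset_bottom by blast
  qed
  moreover have "lex_omega_le le x u" if "x \<in> X" for x
    unfolding lex_omega_le_iff
  proof (intro allI impI)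
    fix m assume "\<forall>i<m. x i = u i"
    then have "x m \<in> next_entries X u m" using that unfolding next_entries_def by blast
    then show "le (x m) (u m)" using u unfolding is_lub_def by blast
  qed
  moreover have "lex_omega_le le u v" if v: "v \<in> Lex" and ub: "\<forall>x\<in>X. lex_omega_le le x v" for v
    unfolding lex_omega_le_iff
  proof (intro allI impI)
    fix m assume "\<forall>i<m. u i = v i"
    then have "le y (v m)" if "y \<in> next_entries X u m" for y
      using that ub unfolding next_entries_def lex_omega_le_iff by auto
    moreover have "v m \<in> A" using v by (rule Lex_entry)
    ultimately show "le (u m) (v m)" using u unfolding is_lub_def by blast
  qed
  ultimately show ?thesis unfolding is_lub_def by blast
qed

lemma Lex_lub_exists:
  assumes "X \<subseteq> Lex" "\<And>u k. \<exists>v. is_lub A le (next_entries X u k) v"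
  shows "\<exists>u. is_lub Lex (lex_omega_le le) X u"
  using entrywise_lub_exists[OF assms(2)] is_lub_Lex_entrywise[OF assms(1)] by blast

lemma next_entries_mult_omega:
  assumes "\<forall>i<k. a i \<in> canc A mult" "X \<subseteq> Lex" "u \<in> Lex"
  shows "next_entries (mult_omega mult a ` X) (mult_omega mult a u) k = mult (a k) ` next_entries X u k"
proof -
  have "mult_omega mult a x i = mult_omega mult a u i \<longleftrightarrow> x i = u i" if "x \<in> X" "i < k" for x i
    unfolding mult_omega_def
    using canc_cancel_left[OF comm_monoid _ Lex_entry Lex_entry] assms that by blast
  then have "{y \<in> mult_omega mult a ` X. \<forall>i<k. y i = mult_omega mult a u i}
      = mult_omega mult a ` {x \<in> X. \<forall>i<k. x i = u i}"
    by auto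
  then show ?thesis
    unfolding next_entries_def by (simp add: image_image mult_omega_def)
qed

lemma Lex_lub_mult:
  assumes a: "a \<in> Lex" and X: "X \<subseteq> Lex" and u: "is_lub Lex (lex_omega_le le) X u"
    and lub_ex: "\<And>u k. \<exists>v. is_lub A le (next_entries X u k) v"
    and distrib: "\<And>c u k v. c \<in> A \<Longrightarrow> is_lub A le (next_entries X u k) v \<Longrightarrow>
                    is_lub A le (mult c ` next_entries X u k) (mult c v)"
  shows "is_lub Lex (lex_omega_le le) (mult_omega mult a ` X) (mult_omega mult a u)"
proof -
  obtain w where w: "\<And>k. is_lub A le (next_entries X w k) (w k)"
    using entrywise_lub_exists[OF lub_ex] by blast
  have "u = w"
    using is_lub_unique[OF partial_order_Lex u is_lub_Lex_entrywise[OF X w]] .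
  with w have u_entries: "\<And>k. is_lub A le (next_entries X u k) (u k)" by simp
  have uL: "u \<in> Lex" using u unfolding is_lub_def by blast
  show ?thesis
  proof (rule is_lub_Lex_entrywise)
    show "mult_omega mult a ` X \<subseteq> Lex"
      using a X comm_monoid_onD(2)[OF comm_monoid_Lex] by blast
  next
    fix k
    show "is_lub A le (next_entries (mult_omega mult a ` X) (mult_omega mult a u) k)
            (mult_omega mult a u k)"
    proof (cases "\<forall>i<k. a i \<in> canc A mult")
      case True
      have "a k \<in> A" using a by (rule Lex_entry)
      then show ?thesis
        using distrib[OF _ u_entries] next_entries_mult_omega[OF True X uL]
        by (simp add: mult_omega_def)
    next
      case False
      then have "a k = bottom" using a Lex_bottom_after by blast
      then have "next_entries (mult_omega mult a ` X) (mult_omega mult a u) k \<subseteq> {bottom}"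
        and "mult_omega mult a u k = bottom"
        using X uL bottom_mult Lex_entry unfolding next_entries_def mult_omega_def by auto
      then show ?thesis using is_lub_subset_bottom by blast
    qed
  qed
qed

lemma slm_Lex: "slm Lex (lex_omega_le le) (mult_omega mult) (one_omega one)"
  unfolding slm_def
proof (intro conjI allI impI comm_monoid_Lex partial_order_Lex)
  fix X assume X: "finite X \<and> X \<subseteq> Lex"
  show "\<exists>u. is_lub Lex (lex_omega_le le) X u"
  proof (rule Lex_lub_exists)
    show "X \<subseteq> Lex" using X by blast
    show "\<exists>v. is_lub A le (next_entries X w k) v" for w k
      using X by (intro finite_lub_exists finite_next_entries next_entries_subset) blast+
  qed
qed

lemma finitely_distributive_Lex: "finitely_distributive Lex (lex_omega_le le) (mult_omega mult)"
  unfolding finitely_distributive_def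
proof (intro ballI allI impI)
  fix a X u
  assume a: "a \<in> Lex" and X: "finite X \<and> X \<subseteq> Lex \<and> is_lub Lex (lex_omega_le le) X u"
  have entries: "finite (next_entries X w k)" "next_entries X w k \<subseteq> A" for w k
    using X finite_next_entries next_entries_subset[of X] by blast+
  show "is_lub Lex (lex_omega_le le) (mult_omega mult a ` X) (mult_omega mult a u)"
  proof (rule Lex_lub_mult[OF a])
    show "X \<subseteq> Lex" "is_lub Lex (lex_omega_le le) X u" using X by blast+
    show "\<exists>v. is_lub A le (next_entries X w k) v" for w k
      using entries by (rule finite_lub_exists)
    show "is_lub A le (mult c ` next_entries X w k) (mult c v)"
      if "c \<in> A" "is_lub A le (next_entries X w k) v" for c w k v
      using finitely_distributiveD[OF fin_distrib that(1) entries that(2)] .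
  qed
qed

lemma clm_Lex:
  assumes "clm A le mult one"
  shows "clm Lex (lex_omega_le le) (mult_omega mult) (one_omega one)"
  unfolding clm_def
proof (intro conjI allI impI comm_monoid_Lex partial_order_Lex)
  fix X assume X: "X \<subseteq> Lex"
  show "\<exists>u. is_lub Lex (lex_omega_le le) X u"
  proof (rule Lex_lub_exists[OF X])
    show "\<exists>v. is_lub A le (next_entries X w k) v" for w k
      using assms next_entries_subset[OF X] unfolding clm_def by blast
  qed
qed

lemma distributive_Lex:
  assumes "clm A le mult one" "distributive A le mult"
  shows "distributive Lex (lex_omega_le le) (mult_omega mult)"
  unfolding distributive_def
proof (intro ballI allI impI)
  fix a X u
  assume a: "a \<in> Lex" and X: "X \<subseteq> Lex \<and> is_lub Lex (lex_omega_le le) X u"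
  have entries: "next_entries X w k \<subseteq> A" for w k
    using X next_entries_subset[of X] by blast
  show "is_lub Lex (lex_omega_le le) (mult_omega mult a ` X) (mult_omega mult a u)"
  proof (rule Lex_lub_mult[OF a])
    show "X \<subseteq> Lex" "is_lub Lex (lex_omega_le le) X u" using X by blast+
    show "\<exists>v. is_lub A le (next_entries X w k) v" for w k
      using assms(1) entries unfolding clm_def by blast
    show "is_lub A le (mult c ` next_entries X w k) (mult c v)"
      if "c \<in> A" "is_lub A le (next_entries X w k) v" for c w k v
      using distributiveD[OF assms(2) that(1) entries that(2)] .
  qed
qed

end

theorem proposition6:
  fixes A :: "'a set" and le :: "'a \<Rightarrow> 'a \<Rightarrow> bool"
    and mult :: "'a \<Rightarrow> 'a \<Rightarrow> 'a" and one :: 'a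
  shows
    "(slm A le mult one \<and> finitely_distributive A le mult \<longrightarrow>
        slm (lex_omega A le mult) (lex_omega_le le) (mult_omega mult) (one_omega one) \<and>
        finitely_distributive (lex_omega A le mult) (lex_omega_le le) (mult_omega mult))
     \<and>
     (clm A le mult one \<and> distributive A le mult \<longrightarrow>
        clm (lex_omega A le mult) (lex_omega_le le) (mult_omega mult) (one_omega one) \<and>
        distributive (lex_omega A le mult) (lex_omega_le le) (mult_omega mult))"
proof (intro conjI impI)
  assume "slm A le mult one \<and> finitely_distributive A le mult"
  then interpret fd_slm A le mult one by unfold_locales blast+
  show "slm (lex_omega A le mult) (lex_omega_le le) (mult_omega mult) (one_omega one)"
    by (rule slm_Lex)
  show "finitely_distributive (lex_omega A le mult) (lex_omega_le le) (mult_omega mult)"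
    by (rule finitely_distributive_Lex)
next
  assume clm_distrib: "clm A le mult one \<and> distributive A le mult"
  then interpret fd_slm A le mult one
    by unfold_locales (blast intro: clm_imp_slm distributive_imp_finitely_distributive)+
  show "clm (lex_omega A le mult) (lex_omega_le le) (mult_omega mult) (one_omega one)"
    using clm_distrib by (blast intro: clm_Lex)
  show "distributive (lex_omega A le mult) (lex_omega_le le) (mult_omega mult)"
    using clm_distrib by (blast intro: distributive_Lex)
qed

end
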